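(* Let $\beta,p$ be positive integers with $\beta\ge p$. Then $C(1,\beta,p)=C_{WWL}(\beta,p)$.
   Context: Memory cells are binary; cell-state vectors of $n$ cells lie in $\{0,1\}^n$. A code on $n$ cells consists, for each write $i\ge1$, of a real $R_i\ge0$, an encoder $\mathcal{E}_i:\{1,\ldots,\lfloor2^{nR_i}\rfloor\}\times\{0,1\}^n\to\{0,1\}^n$ and decoder $\mathcal{D}_i$ with $\mathcal{D}_i(\mathcal{E}_i(m,\mathbf{u}))=m$ (both may depend on $i$; the decoder sees only the current state). Starting from $\mathbf{v}_0=\mathbf{0}$, messages produce states $\mathbf{v}_i=\mathcal{E}_i(m_i,\mathbf{v}_{i-1})$. The code is $(\alpha,\beta,p)$-constrained if for every message sequence, every $i\ge0$ and every $1\le j\le n-\beta+1$, $|\{(k,\ell): v_{i+k,j+\ell}\ne v_{i+k+1,j+\ell}, 0\le k<\alpha, 0\le\ell<\beta\}|\le p$. Rate: $\lim_{m\to\infty}\frac1m\sum_{i=1}^mR_i$. $C_n(\alpha,\beta,p)$ is the supremum of rates of $(\alpha,\beta,p)$-constrained codes on $n$ cells and $C(\alpha,\beta,p)=\lim_{n\to\infty}C_n(\alpha,\beta,p)$. A binary vector is $(\beta,p)$-window-weight-limited (WWL) if every $\beta$ consecutive entries contain at most $p$ ones; with $\mathcal{S}_n(\beta,p)$ the set of such vectors of length $n$, $C_{WWL}(\beta,p)=\lim_{n\to\infty}\frac1n\log_2|\mathcal{S}_n(\beta,p)|$. *)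

theory Defs
  imports Complex_Main
begin

text \<open>Cell-state vectors of n binary cells are bool lists of length n (True = 1),
  cells indexed 0..n-1. Writes are indexed i >= 1.
  R i : rate of write i; E i m u : encoder of write i; D i v : decoder of write i.\<close>

definition num_msgs :: "nat \<Rightarrow> (nat \<Rightarrow> real) \<Rightarrow> nat \<Rightarrow> nat" where
  "num_msgs n R i = nat \<lfloor>2 powr (real n * R i)\<rfloor>"

definition is_code ::
  "nat \<Rightarrow> (nat \<Rightarrow> real) \<Rightarrow> (nat \<Rightarrow> nat \<Rightarrow> bool list \<Rightarrow> bool list)
     \<Rightarrow> (nat \<Rightarrow> bool list \<Rightarrow> nat) \<Rightarrow> bool" where
  "is_code n R E D \<longleftrightarrow>
     (\<forall>i\<ge>1. R i \<ge> 0 \<and>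
        (\<forall>m\<in>{1..num_msgs n R i}. \<forall>u. length u = n \<longrightarrow>
            length (E i m u) = n \<and> D i (E i m u) = m))"

primrec states ::
  "nat \<Rightarrow> (nat \<Rightarrow> nat \<Rightarrow> bool list \<Rightarrow> bool list) \<Rightarrow> (nat \<Rightarrow> nat) \<Rightarrow> nat \<Rightarrow> bool list" where
  "states n E ms 0 = replicate n False"
| "states n E ms (Suc i) = E (Suc i) (ms (Suc i)) (states n E ms i)"

definition constrained ::
  "nat \<Rightarrow> nat \<Rightarrow> nat \<Rightarrow> nat \<Rightarrow> (nat \<Rightarrow> real) \<Rightarrow> (nat \<Rightarrow> nat \<Rightarrow> bool list \<Rightarrow> bool list) \<Rightarrow> bool" where
  "constrained n \<alpha> \<beta> p R E \<longleftrightarrow>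
     (\<forall>ms. (\<forall>i\<ge>1. ms i \<in> {1..num_msgs n R i}) \<longrightarrow>
        (\<forall>i j. j + \<beta> \<le> n \<longrightarrow>
           card {(k, l). k < \<alpha> \<and> l < \<beta> \<and>
                 states n E ms (i + k) ! (j + l) \<noteq> states n E ms (i + k + 1) ! (j + l)} \<le> p))"

definition has_rate :: "(nat \<Rightarrow> real) \<Rightarrow> real \<Rightarrow> bool" where
  "has_rate R r \<longleftrightarrow> (\<lambda>m. (\<Sum>i=1..m. R i) / real m) \<longlonglongrightarrow> r"

definition Cn :: "nat \<Rightarrow> nat \<Rightarrow> nat \<Rightarrow> nat \<Rightarrow> real" where
  "Cn n \<alpha> \<beta> p = Sup {r. \<exists>R E D. is_code n R E D \<and> constrained n \<alpha> \<beta> p R E \<and> has_rate R r}"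

definition WWL_set :: "nat \<Rightarrow> nat \<Rightarrow> nat \<Rightarrow> bool list set" where
  "WWL_set n \<beta> p = {x. length x = n \<and>
      (\<forall>j. j + \<beta> \<le> n \<longrightarrow> length (filter id (take \<beta> (drop j x))) \<le> p)}"

end

theory Submission
  imports Defs "HOL-Real_Asymp.Real_Asymp"
begin

text \<open>For \<open>\<alpha> = 1\<close> the constraint says exactly that every write changes the state by a
  \<open>(\<beta>, p)\<close>-window-weight-limited vector, namely the XOR of consecutive states. From a fixed
  state distinct messages need distinct changes, so a write carries at most \<open>log (|S\<^sub>n| + 1)\<close> bits.
  Conversely, doubling a linear code \<open>V\<close> by the translate that overlaps the covered set
  \<open>S\<^sub>n \<oplus> V\<close> least squares the uncovered fraction of the cube, so after \<open>O(log n)\<close> doublings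
  \<open>S\<^sub>n \<oplus> V\<close> is the whole cube while \<open>|V| |S\<^sub>n| \<le> 2n 2\<^sup>n\<close>. Taking the cosets of \<open>V\<close> as
  messages, every coset contains a word reachable from any state by a WWL change, and a word is
  decoded by its coset; this gives \<open>log |S\<^sub>n| - log 2n\<close> bits per write. Both bounds are
  \<open>(log |S\<^sub>n| + O(log n)) / n\<close>, and \<open>log |S\<^sub>n|\<close> is subadditive in \<open>n\<close>, so Fekete's lemma gives
  the common limit.\<close>

section \<open>Bitwise XOR of bit vectors\<close>

(* map2 truncates to the shorter list, so the cancellation laws need equal lengths. *)
definition xor_list :: "bool list \<Rightarrow> bool list \<Rightarrow> bool list" (infixl "\<oplus>" 65) where
  "xs \<oplus> ys = map2 (\<noteq>) xs ys"

lemma length_xor_list [simp]: "length (xs \<oplus> ys) = min (length xs) (length ys)"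
  by (simp add: xor_list_def)

lemma nth_xor_list [simp]:
  "i < length xs \<Longrightarrow> i < length ys \<Longrightarrow> (xs \<oplus> ys) ! i = (xs ! i \<noteq> ys ! i)"
  by (simp add: xor_list_def)

lemma xor_list_assoc: "xs \<oplus> ys \<oplus> zs = xs \<oplus> (ys \<oplus> zs)"
  by (rule nth_equalityI) auto

lemma xor_list_commute: "xs \<oplus> ys = ys \<oplus> xs"
  by (rule nth_equalityI) auto

interpretation xor_list: abel_semigroup "(\<oplus>)"
  by unfold_locales (fact xor_list_assoc xor_list_commute)+

lemma xor_list_cancel_left: "length xs = length ys \<Longrightarrow> xs \<oplus> (xs \<oplus> ys) = ys"
  by (rule nth_equalityI) auto

lemma xor_list_cancel_right: "length xs = length ys \<Longrightarrow> ys \<oplus> xs \<oplus> xs = ys"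
  by (rule nth_equalityI) auto

lemma xor_list_replicate_False [simp]: "xs \<oplus> replicate (length xs) False = xs"
  by (rule nth_equalityI) auto

definition cube :: "nat \<Rightarrow> bool list set" where
  "cube n = {xs. length xs = n}"

lemma finite_cube [simp]: "finite (cube n)"
  using finite_lists_length_eq[of "UNIV :: bool set" n] by (simp add: cube_def)

lemma xor_list_in_cube [intro]: "xs \<in> cube n \<Longrightarrow> ys \<in> cube n \<Longrightarrow> xs \<oplus> ys \<in> cube n"
  by (simp add: cube_def)

lemma card_cube: "card (cube n) = 2 ^ n"
  using card_lists_length_eq[of "UNIV :: bool set" n] by (simp add: cube_def)

lemma card_le_card_cube: "A \<subseteq> cube n \<Longrightarrow> card A \<le> 2 ^ n"
  by (metis card_cube card_mono finite_cube)

lemma sum_card_translate_overlap: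
  assumes "A \<subseteq> cube n"
  shows "(\<Sum>x\<in>cube n. card {a \<in> A. a \<oplus> x \<in> A}) = card A * card A"
proof -
  have fin: "finite A" using assms finite_cube finite_subset by blast
  have "(\<Sum>x\<in>cube n. card {a \<in> A. a \<oplus> x \<in> A})
      = (\<Sum>x\<in>cube n. \<Sum>a\<in>A. if a \<oplus> x \<in> A then 1 else 0)"
    using fin by (simp add: sum.inter_filter[symmetric])
  also have "\<dots> = (\<Sum>a\<in>A. card {x \<in> cube n. a \<oplus> x \<in> A})"
    by (subst sum.swap) (simp add: sum.inter_filter[symmetric])
  also have "\<dots> = (\<Sum>a\<in>A. card A)"
  proof (rule sum.cong[OF refl])
    fix a assume "a \<in> A"
    with assms have "bij_betw ((\<oplus>) a) {x \<in> cube n. a \<oplus> x \<in> A} A"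
      by (intro bij_betw_byWitness[where f' = "(\<oplus>) a"])
         (auto simp: cube_def subset_iff xor_list_cancel_left)
    then show "card {x \<in> cube n. a \<oplus> x \<in> A} = card A"
      by (rule bij_betw_same_card)
  qed
  finally show ?thesis by simp
qed

lemma exists_translate_small_overlap:
  assumes "A \<subseteq> cube n"
  shows "\<exists>x\<in>cube n. card {a \<in> A. a \<oplus> x \<in> A} * 2 ^ n \<le> card A ^ 2"
proof (rule ccontr)
  assume "\<not> ?thesis"
  then have "(\<Sum>x\<in>cube n. card A ^ 2) < (\<Sum>x\<in>cube n. card {a \<in> A. a \<oplus> x \<in> A} * 2 ^ n)"
    using card_cube[of n] by (intro sum_strict_mono) (auto simp flip: card_gt_0_iff)
  also have "\<dots> = card A * card A * 2 ^ n"
    by (simp add: sum_distrib_right[symmetric] sum_card_translate_overlap[OF assms])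
  finally show False
    by (simp add: card_cube power2_eq_square mult.commute)
qed

section \<open>Covering the cube by translates of a linear code\<close>

definition linear_code :: "nat \<Rightarrow> bool list set \<Rightarrow> bool" where
  "linear_code n V \<longleftrightarrow> V \<subseteq> cube n \<and> replicate n False \<in> V \<and> (\<forall>v\<in>V. \<forall>w\<in>V. v \<oplus> w \<in> V)"

lemma linear_code_zero: "linear_code n {replicate n False}"
  by (simp add: linear_code_def cube_def) (metis length_replicate xor_list_replicate_False)

lemma linear_code_extend:
  assumes V: "linear_code n V" and x: "x \<in> cube n"
  shows "linear_code n (V \<union> (\<lambda>v. v \<oplus> x) ` V)"
  unfolding linear_code_def
proof (intro conjI ballI)
  show "V \<union> (\<lambda>v. v \<oplus> x) ` V \<subseteq> cube n" "replicate n False \<in> V \<union> (\<lambda>v. v \<oplus> x) ` V"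
    using V x by (auto simp: linear_code_def)
  fix v w assume "v \<in> V \<union> (\<lambda>v. v \<oplus> x) ` V" "w \<in> V \<union> (\<lambda>v. v \<oplus> x) ` V"
  then obtain v0 w0 where v0: "v0 \<in> V" "v = v0 \<or> v = v0 \<oplus> x" and w0: "w0 \<in> V" "w = w0 \<or> w = w0 \<oplus> x"
    by blast
  have "length v0 = length x" "length w0 = length x"
    using V x v0 w0 by (auto simp: linear_code_def cube_def)
  then have "v0 \<oplus> x \<oplus> (w0 \<oplus> x) = v0 \<oplus> w0"
    by (intro nth_equalityI) auto
  then have "v \<oplus> w = v0 \<oplus> w0 \<or> v \<oplus> w = v0 \<oplus> w0 \<oplus> x"
    using v0(2) w0(2) by (auto simp: xor_list.assoc xor_list.commute xor_list.left_commute)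
  moreover have "v0 \<oplus> w0 \<in> V"
    using V v0 w0 by (simp add: linear_code_def)
  ultimately show "v \<oplus> w \<in> V \<union> (\<lambda>v. v \<oplus> x) ` V"
    by auto
qed

definition xor_sumset :: "bool list set \<Rightarrow> bool list set \<Rightarrow> bool list set" where
  "xor_sumset B V = (\<lambda>(b, v). b \<oplus> v) ` (B \<times> V)"

lemma xor_sumset_subset_cube: "B \<subseteq> cube n \<Longrightarrow> V \<subseteq> cube n \<Longrightarrow> xor_sumset B V \<subseteq> cube n"
  by (auto simp: xor_sumset_def cube_def subset_iff)

lemma xor_sumset_zero: "B \<subseteq> cube n \<Longrightarrow> xor_sumset B {replicate n False} = B"
  by (force simp: xor_sumset_def cube_def subset_iff)

lemma xor_sumset_extend:
  "xor_sumset B (V \<union> (\<lambda>v. v \<oplus> x) ` V) = xor_sumset B V \<union> (\<lambda>a. a \<oplus> x) ` xor_sumset B V"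
  by (force simp: xor_sumset_def xor_list_assoc)

lemma card_Un_translate:
  assumes A: "A \<subseteq> cube n" and x: "x \<in> cube n"
  shows "card (A \<union> (\<lambda>a. a \<oplus> x) ` A) + card {a \<in> A. a \<oplus> x \<in> A} = 2 * card A"
proof -
  have len: "length a = length x" if "a \<in> A" for a
    using A x that by (auto simp: cube_def)
  have inj: "inj_on (\<lambda>a. a \<oplus> x) A"
    by (rule inj_onI) (metis len xor_list_cancel_right)
  have "A \<inter> (\<lambda>a. a \<oplus> x) ` A = {a \<in> A. a \<oplus> x \<in> A}"
    by (force simp: len xor_list_cancel_right)
  moreover have "finite A"
    using A finite_cube finite_subset by blast
  ultimately show ?thesis
    using card_Un_Int[of A "(\<lambda>a. a \<oplus> x) ` A"] card_image[OF inj] by simp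
qed

lemma linear_code_doubling:
  assumes V: "linear_code n V" and B: "B \<subseteq> cube n"
  shows "\<exists>V'. linear_code n V' \<and> card V' \<le> 2 * card V \<and>
     real (2 ^ n - card (xor_sumset B V')) * 2 ^ n \<le> real (2 ^ n - card (xor_sumset B V)) ^ 2"
proof -
  define A where "A = xor_sumset B V"
  have A: "A \<subseteq> cube n"
    using B V by (simp add: A_def xor_sumset_subset_cube linear_code_def)
  obtain x where x: "x \<in> cube n" and overlap: "card {a \<in> A. a \<oplus> x \<in> A} * 2 ^ n \<le> card A ^ 2"
    using exists_translate_small_overlap[OF A] by blast
  define V' where "V' = V \<union> (\<lambda>v. v \<oplus> x) ` V"
  have "card V' \<le> card V + card ((\<lambda>v. v \<oplus> x) ` V)"
    unfolding V'_def by (rule card_Un_le)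
  moreover have "finite V"
    using V finite_subset[OF _ finite_cube] by (auto simp: linear_code_def)
  ultimately have card_V': "card V' \<le> 2 * card V"
    using card_image_le[of V "\<lambda>v. v \<oplus> x"] by simp
  define N a c U where "N = (2::nat) ^ n" and "a = card A"
    and "c = card {a \<in> A. a \<oplus> x \<in> A}" and "U = card (xor_sumset B V')"
  have "U + c = 2 * a"
    using card_Un_translate[OF A x] by (simp add: U_def c_def a_def V'_def A_def xor_sumset_extend)
  then have U: "real U = 2 * real a - real c"
    by (simp add: flip: of_nat_add of_nat_mult)
  have "xor_sumset B V' \<subseteq> cube n"
    using A x by (auto simp: V'_def A_def xor_sumset_extend)
  then have "U \<le> N" "a \<le> N"
    using A by (simp_all add: U_def a_def N_def card_le_card_cube)
  then have "real (N - U) * N = real N ^ 2 - 2 * real a * N + real c * N"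
    by (simp add: of_nat_diff U power2_eq_square algebra_simps)
  also have "\<dots> \<le> real N ^ 2 - 2 * real a * N + real a ^ 2"
    using overlap by (simp add: c_def N_def a_def flip: of_nat_mult of_nat_power)
  also have "\<dots> = real (N - a) ^ 2"
    using \<open>a \<le> N\<close> by (simp add: of_nat_diff power2_eq_square algebra_simps)
  finally show ?thesis
    using linear_code_extend[OF V x] card_V' by (auto simp: N_def U_def a_def A_def V'_def)
qed

lemma exists_linear_code_uncovered_le:
  assumes B: "B \<subseteq> cube n"
  shows "\<exists>V. linear_code n V \<and> card V \<le> 2 ^ t \<and>
     real (2 ^ n - card (xor_sumset B V)) \<le> 2 ^ n * (1 - real (card B) / 2 ^ n) ^ 2 ^ t"
proof (induction t)
  case 0
  have "real (2 ^ n - card B) = 2 ^ n * (1 - real (card B) / 2 ^ n)"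
    using card_le_card_cube[OF B] by (simp add: of_nat_diff algebra_simps)
  then show ?case
    using linear_code_zero[of n] xor_sumset_zero[OF B] by (intro exI[of _ "{replicate n False}"]) simp
next
  case (Suc t)
  then obtain V where V: "linear_code n V" "card V \<le> 2 ^ t"
    and uncovered: "real (2 ^ n - card (xor_sumset B V)) \<le> 2 ^ n * (1 - real (card B) / 2 ^ n) ^ 2 ^ t"
    by blast
  obtain V' where V': "linear_code n V'" "card V' \<le> 2 * card V"
    and uncovered': "real (2 ^ n - card (xor_sumset B V')) * 2 ^ n \<le> real (2 ^ n - card (xor_sumset B V)) ^ 2"
    using linear_code_doubling[OF V(1) B] by blast
  define f where "f = 1 - real (card B) / 2 ^ n"
  have "real (2 ^ n - card (xor_sumset B V')) * 2 ^ n \<le> (2 ^ n * f ^ 2 ^ t) ^ 2"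
    using uncovered' uncovered by (auto simp: f_def intro: order_trans power_mono)
  also have "\<dots> = (2 ^ n * f ^ 2 ^ Suc t) * 2 ^ n"
    by (simp add: power2_eq_square power_add[symmetric] mult_2 algebra_simps)
  finally have "real (2 ^ n - card (xor_sumset B V')) \<le> 2 ^ n * f ^ 2 ^ Suc t"
    by (simp add: mult.commute)
  then show ?case
    using V V' by (auto simp: f_def intro!: exI[of _ V'])
qed

lemma exists_power_of_two_mult_between:
  fixes s m :: nat
  assumes "0 < s" "s \<le> m"
  shows "\<exists>T. m < 2 ^ T * s \<and> 2 ^ T * s \<le> 2 * m"
proof -
  define k where "k = m div s"
  have "1 \<le> k"
    using assms div_le_mono[of s m s] by (simp add: k_def)
  then obtain t where t: "2 ^ t \<le> k" "k < 2 ^ (t + 1)"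
    using ex_power_ivl1[of 2 k] by auto
  have "m < (k + 1) * s"
    using assms by (simp add: k_def dividend_less_div_times)
  also have "\<dots> \<le> 2 ^ (t + 1) * s"
    using t(2) by (intro mult_le_mono1) simp
  finally have "m < 2 ^ (t + 1) * s" .
  moreover have "2 ^ t * s \<le> k * s"
    using t(1) by (rule mult_le_mono1)
  then have "2 ^ t * s \<le> m"
    using div_times_less_eq_dividend[of m s] unfolding k_def by linarith
  then have "2 ^ (t + 1) * s \<le> 2 * m"
    by simp
  ultimately show ?thesis
    by blast
qed

lemma two_pow_mult_one_minus_pow_lt_1:
  fixes n s K :: nat
  assumes s: "s \<le> 2 ^ n" and K: "n * 2 ^ n < K * s"
  shows "2 ^ n * (1 - real s / 2 ^ n) ^ K < 1"
proof -
  have "0 < K"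
    using K by (cases K) auto
  have "real s \<le> 2 ^ n"
    using s by (metis of_nat_le_iff of_nat_numeral of_nat_power)
  then have "K * real s / 2 ^ n \<le> real K"
    by (simp add: field_simps mult_left_mono)
  then have "(1 - (K * real s / 2 ^ n) / real K) ^ K \<le> exp (- (K * real s / 2 ^ n))"
    by (rule exp_ge_one_minus_x_over_n_power_n) (use \<open>0 < K\<close> in simp)
  then have "(1 - real s / 2 ^ n) ^ K \<le> exp (- (K * real s / 2 ^ n))"
    using \<open>0 < K\<close> by simp
  also have "\<dots> < exp (- real n)"
  proof -
    have "real (n * 2 ^ n) < real (K * s)"
      using K by (simp only: of_nat_less_iff)
    then show ?thesis
      by (simp add: field_simps)
  qed
  finally have "2 ^ n * (1 - real s / 2 ^ n) ^ K < 2 ^ n * exp (- real n)"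
    by simp
  also have "\<dots> \<le> exp 1 ^ n * exp (- real n)"
    using exp_ge_add_one_self[of 1] by (intro mult_right_mono power_mono) auto
  also have "\<dots> = 1"
    by (simp add: exp_of_nat_mult[symmetric] exp_add[symmetric])
  finally show ?thesis .
qed

lemma exists_linear_code_covering:
  assumes B: "B \<subseteq> cube n" "B \<noteq> {}" and n: "1 \<le> n"
  shows "\<exists>V. linear_code n V \<and> xor_sumset B V = cube n \<and>
            real (card V) * real (card B) \<le> 2 * real n * 2 ^ n"
proof -
  define s where "s = card B"
  have "0 < s" "s \<le> n * 2 ^ n"
    using B n card_le_card_cube[OF B(1)] finite_subset[OF B(1) finite_cube]
    by (auto simp: s_def card_gt_0_iff intro: le_trans)
  \<comment> \<open>\<open>2\<^sup>T\<close> doublings leave less than one word uncovered and still satisfy \<open>|V| s \<le> 2n 2\<^sup>n\<close>.\<close>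
  then obtain T where T: "n * 2 ^ n < 2 ^ T * s" "2 ^ T * s \<le> 2 * (n * 2 ^ n)"
    using exists_power_of_two_mult_between by blast
  obtain V where V: "linear_code n V" "card V \<le> 2 ^ T"
    and uncovered: "real (2 ^ n - card (xor_sumset B V)) \<le> 2 ^ n * (1 - real s / 2 ^ n) ^ 2 ^ T"
    using exists_linear_code_uncovered_le[OF B(1)] unfolding s_def by blast
  have "2 ^ n * (1 - real s / 2 ^ n) ^ 2 ^ T < 1"
    using two_pow_mult_one_minus_pow_lt_1 card_le_card_cube[OF B(1)] T(1) by (simp add: s_def)
  with uncovered have "card (cube n) \<le> card (xor_sumset B V)"
    by (simp add: card_cube)
  moreover have "xor_sumset B V \<subseteq> cube n"
    using B(1) V(1) by (simp add: xor_sumset_subset_cube linear_code_def)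
  ultimately have covering: "xor_sumset B V = cube n"
    using card_seteq[OF finite_cube] by blast
  have "card V * s \<le> 2 ^ T * s"
    using V(2) by (rule mult_le_mono1)
  then have "card V * s \<le> 2 * n * 2 ^ n"
    using T(2) by (simp only: mult.assoc order_trans)
  then have "real (card V * s) \<le> real (2 * n * 2 ^ n)"
    by (simp only: of_nat_le_iff)
  then have "real (card V) * real (card B) \<le> 2 * real n * 2 ^ n"
    by (simp add: s_def)
  with V(1) covering show ?thesis
    by blast
qed

section \<open>Coset codes\<close>

definition cosets :: "nat \<Rightarrow> bool list set \<Rightarrow> bool list set set" where
  "cosets n V = (\<lambda>g. (\<oplus>) g ` V) ` cube n"

lemma coset_translate:
  assumes V: "linear_code n V" and g: "length g = n" and w: "w \<in> V"
  shows "(\<oplus>) (g \<oplus> w) ` V = (\<oplus>) g ` V"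
proof -
  have len: "length v = n" if "v \<in> V" for v
    using V that by (auto simp: linear_code_def cube_def)
  have closed: "w \<oplus> v \<in> V" if "v \<in> V" for v
    using V w that by (simp add: linear_code_def)
  have "g \<oplus> v = g \<oplus> w \<oplus> (w \<oplus> v)" if "v \<in> V" for v
    using that w by (simp add: len xor_list_assoc xor_list_cancel_left)
  then show ?thesis
    using closed by (auto simp: xor_list_assoc)
qed

lemma card_cube_le_card_cosets:
  assumes V: "linear_code n V"
  shows "2 ^ n \<le> card (cosets n V) * card V"
proof -
  have fin: "finite V"
    using V finite_subset[OF _ finite_cube] by (auto simp: linear_code_def)
  have "cube n \<subseteq> \<Union> (cosets n V)"
  proof
    fix g assume "g \<in> cube n"
    then have "g = g \<oplus> replicate n False" "g \<in> cube n"
      by (auto simp: cube_def)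
    then show "g \<in> \<Union> (cosets n V)"
      using V by (auto simp: cosets_def linear_code_def)
  qed
  then have "card (cube n) \<le> card (\<Union> (cosets n V))"
    using fin by (intro card_mono) (auto simp: cosets_def)
  then have "2 ^ n \<le> card (\<Union> (cosets n V))"
    by (simp add: card_cube)
  also have "\<dots> \<le> (\<Sum>C\<in>cosets n V. card C)"
    by (rule card_Union_le_sum_card)
  also have "\<dots> \<le> (\<Sum>C\<in>cosets n V. card V)"
    by (intro sum_mono) (auto simp: cosets_def card_image_le fin)
  finally show ?thesis
    by simp
qed

lemma card_le_card_cosets:
  assumes V: "linear_code n V" and card_V: "real (card V) * real (card B) \<le> 2 * real n * 2 ^ n"
  shows "real (card B) \<le> 2 * real n * real (card (cosets n V))"
proof -
  have "real (2 ^ n) \<le> real (card (cosets n V) * card V)"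
    using card_cube_le_card_cosets[OF V] by (simp only: of_nat_le_iff)
  then have "2 ^ n * real (card B) \<le> real (card (cosets n V)) * real (card V) * real (card B)"
    by (simp add: mult_right_mono)
  also have "\<dots> \<le> real (card (cosets n V)) * (2 * real n * 2 ^ n)"
    using card_V by (simp add: mult.assoc mult_left_mono)
  finally show ?thesis
    by (simp add: field_simps)
qed

lemma coset_meets_translate:
  assumes covering: "xor_sumset B V = cube n" and B: "B \<subseteq> cube n" and V: "linear_code n V"
    and C: "C \<in> cosets n V" and u: "u \<in> cube n"
  shows "\<exists>v\<in>C. v \<oplus> u \<in> B"
proof -
  obtain g where g: "g \<in> cube n" "C = (\<oplus>) g ` V"
    using C by (auto simp: cosets_def)
  have "u \<oplus> g \<in> xor_sumset B V"
    using covering g u by auto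
  then obtain b w where bw: "b \<in> B" "w \<in> V" "u \<oplus> g = b \<oplus> w"
    by (auto simp: xor_sumset_def)
  have "length b = length w"
    using B V bw by (auto simp: linear_code_def cube_def)
  then have "g \<oplus> w \<oplus> u = b"
    using bw(3) by (metis xor_list.assoc xor_list.commute xor_list_cancel_right)
  then show ?thesis
    using g bw by blast
qed

lemma exists_coset_code:
  assumes B: "B \<subseteq> cube n" "B \<noteq> {}" and n: "1 \<le> n"
  shows "\<exists>M E D. real (card B) \<le> 2 * real n * real M \<and>
     (\<forall>m\<in>{1..M}. \<forall>u\<in>cube n. E m u \<in> cube n \<and> E m u \<oplus> u \<in> B \<and> D (E m u) = m)"
proof -
  obtain V where V: "linear_code n V" and covering: "xor_sumset B V = cube n"
    and card_V: "real (card V) * real (card B) \<le> 2 * real n * 2 ^ n"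
    using exists_linear_code_covering[OF B n] by blast
  define M where "M = card (cosets n V)"
  obtain h where h: "bij_betw h {1..M} (cosets n V)"
    using ex_bij_betw_nat_finite_1[of "cosets n V"] by (auto simp: M_def cosets_def)
  have card_B: "real (card B) \<le> 2 * real n * real M"
    unfolding M_def using V card_V by (rule card_le_card_cosets)
  define E where "E = (\<lambda>m u. SOME v. v \<in> h m \<and> v \<oplus> u \<in> B)"
  define D where "D = (\<lambda>v. inv_into {1..M} h ((\<oplus>) v ` V))"
  have "E m u \<in> cube n \<and> E m u \<oplus> u \<in> B \<and> D (E m u) = m" if m: "m \<in> {1..M}" and u: "u \<in> cube n" for m u
  proof -
    have hm: "h m \<in> cosets n V"
      using h m by (auto simp: bij_betw_def)
    then have E: "E m u \<in> h m" "E m u \<oplus> u \<in> B"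
      unfolding E_def using someI_ex[OF coset_meets_translate[OF covering B(1) V hm u, unfolded Bex_def]]
      by simp_all
    obtain g where g: "g \<in> cube n" "h m = (\<oplus>) g ` V"
      using hm by (auto simp: cosets_def)
    then obtain w where w: "w \<in> V" "E m u = g \<oplus> w"
      using E(1) by auto
    have "E m u \<in> cube n"
      using g w V by (auto simp: linear_code_def)
    moreover have "(\<oplus>) (E m u) ` V = h m"
      using coset_translate[OF V _ w(1)] g w(2) by (simp add: cube_def)
    then have "D (E m u) = m"
      using h m by (simp add: D_def bij_betw_def inv_into_f_f)
    ultimately show ?thesis
      using E(2) by blast
  qed
  with card_B show ?thesis
    by blast
qed

section \<open>Window-weight-limited vectors and constrained codes\<close>

lemma WWL_set_subset_cube: "WWL_set n \<beta> p \<subseteq> cube n"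
  by (auto simp: WWL_set_def cube_def)

lemma finite_WWL_set: "finite (WWL_set n \<beta> p)"
  using WWL_set_subset_cube finite_cube by (rule finite_subset)

lemma replicate_False_in_WWL_set: "replicate n False \<in> WWL_set n \<beta> p"
  by (simp add: WWL_set_def filter_empty_conv)

lemma card_WWL_set_pos: "0 < card (WWL_set n \<beta> p)"
  using replicate_False_in_WWL_set finite_WWL_set card_gt_0_iff by blast

lemma card_WWL_set_add_le:
  "card (WWL_set (m + k) \<beta> p) \<le> card (WWL_set m \<beta> p) * card (WWL_set k \<beta> p)"
proof -
  have "take m x \<in> WWL_set m \<beta> p \<and> drop m x \<in> WWL_set k \<beta> p" if "x \<in> WWL_set (m + k) \<beta> p" for x
  proof -
    have "take \<beta> (drop j (take m x)) = take \<beta> (drop j x)" if "j + \<beta> \<le> m" for j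
      using that by (simp add: drop_take min_def)
    moreover have "take \<beta> (drop j (drop m x)) = take \<beta> (drop (j + m) x)" for j
      by simp
    ultimately show ?thesis
      using that by (auto simp: WWL_set_def simp del: drop_drop)
  qed
  then have "(\<lambda>x. (take m x, drop m x)) ` WWL_set (m + k) \<beta> p \<subseteq> WWL_set m \<beta> p \<times> WWL_set k \<beta> p"
    by auto
  moreover have "inj_on (\<lambda>x. (take m x, drop m x)) (WWL_set (m + k) \<beta> p)"
    by (rule inj_onI) (metis append_take_drop_id prod.inject)
  ultimately have "card (WWL_set (m + k) \<beta> p) \<le> card (WWL_set m \<beta> p \<times> WWL_set k \<beta> p)"
    using finite_WWL_set by (intro card_inj_on_le) auto
  then show ?thesis
    by (simp add: card_cartesian_product)
qed

lemma log_card_WWL_set_add_le: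
  "log 2 (card (WWL_set (m + k) \<beta> p)) \<le> log 2 (card (WWL_set m \<beta> p)) + log 2 (card (WWL_set k \<beta> p))"
proof -
  have "real (card (WWL_set (m + k) \<beta> p)) \<le> real (card (WWL_set m \<beta> p) * card (WWL_set k \<beta> p))"
    using card_WWL_set_add_le by (simp only: of_nat_le_iff)
  then have "log 2 (card (WWL_set (m + k) \<beta> p)) \<le> log 2 (real (card (WWL_set m \<beta> p) * card (WWL_set k \<beta> p)))"
    using card_WWL_set_pos[of "m + k" \<beta> p] by (intro log_mono) auto
  then show ?thesis
    using card_WWL_set_pos[of _ \<beta> p] by (simp add: log_mult)
qed

lemma card_window_changes:
  assumes "length x = n" "length y = n" "j + \<beta> \<le> n"
  shows "card {(k, l). k < (1::nat) \<and> l < \<beta> \<and> x ! (j + l) \<noteq> y ! (j + l)}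
         = length (filter id (take \<beta> (drop j (y \<oplus> x))))"
proof -
  have "{(k, l). k < (1::nat) \<and> l < \<beta> \<and> x ! (j + l) \<noteq> y ! (j + l)}
      = Pair 0 ` {l. l < \<beta> \<and> x ! (j + l) \<noteq> y ! (j + l)}"
    by auto
  then have "card {(k, l). k < (1::nat) \<and> l < \<beta> \<and> x ! (j + l) \<noteq> y ! (j + l)}
      = card {l. l < \<beta> \<and> x ! (j + l) \<noteq> y ! (j + l)}"
    by (simp add: card_image inj_on_def)
  also have "\<dots> = card {i. i < length (take \<beta> (drop j (y \<oplus> x))) \<and> id (take \<beta> (drop j (y \<oplus> x)) ! i)}"
    using assms by (intro arg_cong[where f = card]) auto
  also have "\<dots> = length (filter id (take \<beta> (drop j (y \<oplus> x))))"
    by (rule length_filter_conv_card[symmetric])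
  finally show ?thesis .
qed

lemma length_states:
  assumes "is_code n R E D" "\<forall>i\<ge>1. ms i \<in> {1..num_msgs n R i}"
  shows "length (states n E ms t) = n"
  using assms by (induction t) (auto simp: is_code_def)

lemma states_cong:
  "(\<And>k. 1 \<le> k \<Longrightarrow> k \<le> t \<Longrightarrow> ms k = ms' k) \<Longrightarrow> states n E ms t = states n E ms' t"
  by (induction t) auto

lemma constrained_1_iff:
  assumes code: "is_code n R E D"
  shows "constrained n 1 \<beta> p R E \<longleftrightarrow>
     (\<forall>ms. (\<forall>i\<ge>1. ms i \<in> {1..num_msgs n R i}) \<longrightarrow>
        (\<forall>i. states n E ms (Suc i) \<oplus> states n E ms i \<in> WWL_set n \<beta> p))"
proof -
  have "{(k, l). k < 1 \<and> l < \<beta> \<and> states n E ms (i + k) ! (j + l) \<noteq> states n E ms (i + k + 1) ! (j + l)}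
      = {(k, l). k < (1::nat) \<and> l < \<beta> \<and> states n E ms i ! (j + l) \<noteq> states n E ms (Suc i) ! (j + l)}"
    for ms i j
    by auto
  then show ?thesis
    using card_window_changes[OF length_states[OF code] length_states[OF code]] length_states[OF code]
    by (auto simp: constrained_def WWL_set_def simp del: states.simps)
qed

lemma num_msgs_ge_1: "0 \<le> R i \<Longrightarrow> 1 \<le> num_msgs n R i"
  using ge_one_powr_ge_zero[of 2 "real n * R i"] by (simp add: num_msgs_def le_nat_iff)

lemma num_msgs_le_card_WWL_set:
  assumes code: "is_code n R E D" and con: "constrained n 1 \<beta> p R E" and i: "1 \<le> i"
  shows "num_msgs n R i \<le> card (WWL_set n \<beta> p)"
proof -
  define ms0 where "ms0 = (\<lambda>k::nat. 1::nat)"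
  have valid0: "\<forall>k\<ge>1. ms0 k \<in> {1..num_msgs n R k}"
    using code num_msgs_ge_1 by (auto simp: ms0_def is_code_def)
  then have valid: "\<forall>k\<ge>1. (ms0(i := m)) k \<in> {1..num_msgs n R k}" if "m \<in> {1..num_msgs n R i}" for m
    using that by auto
  obtain k where k: "i = Suc k"
    using i by (cases i) auto
  define u where "u = states n E ms0 k"
  have u: "length u = n"
    using length_states[OF code valid0] by (simp add: u_def)
  have before: "states n E (ms0(i := m)) k = u" for m
    unfolding u_def by (rule states_cong) (auto simp: ms0_def k)
  then have after: "states n E (ms0(i := m)) (Suc k) = E i m u" for m
    by (simp add: k)
  have WWL: "E i m u \<oplus> u \<in> WWL_set n \<beta> p" if "m \<in> {1..num_msgs n R i}" for m
    using con valid[OF that] before after unfolding constrained_1_iff[OF code] by metis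
  have "inj_on (\<lambda>m. E i m u \<oplus> u) {1..num_msgs n R i}"
  proof (rule inj_onI)
    fix m m' assume m: "m \<in> {1..num_msgs n R i}" and m': "m' \<in> {1..num_msgs n R i}"
      and "E i m u \<oplus> u = E i m' u \<oplus> u"
    with code i u have "E i m u = E i m' u"
      by (metis is_code_def xor_list_cancel_right)
    then show "m = m'"
      using code i m m' u by (metis is_code_def)
  qed
  then have "card {1..num_msgs n R i} \<le> card (WWL_set n \<beta> p)"
    using WWL finite_WWL_set by (intro card_inj_on_le) auto
  then show ?thesis
    by simp
qed

lemma has_rate_le:
  assumes "has_rate R r" and "\<And>i. 1 \<le> i \<Longrightarrow> R i \<le> c"
  shows "r \<le> c"
proof (rule LIMSEQ_le_const2[OF assms(1)[unfolded has_rate_def]])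
  have "(\<Sum>i=1..m. R i) \<le> real m * c" for m
    using sum_mono[of "{1..m}" R "\<lambda>_. c"] assms(2) by simp
  then show "\<exists>N. \<forall>m\<ge>N. (\<Sum>i=1..m. R i) / real m \<le> c"
    by (intro exI[of _ 1]) (simp add: divide_le_eq mult.commute)
qed

lemma has_rate_const: "has_rate (\<lambda>_. r) r"
  unfolding has_rate_def
  by (rule tendsto_eventually) (use eventually_ge_at_top[of "1::nat"] in \<open>eventually_elim, simp\<close>)

lemma rate_le_log_card_WWL_set:
  assumes code: "is_code n R E D" and con: "constrained n 1 \<beta> p R E"
    and r: "has_rate R r" and n: "1 \<le> n"
  shows "r \<le> log 2 (real (card (WWL_set n \<beta> p)) + 1) / real n"
  using r
proof (rule has_rate_le)
  fix i :: nat assume i: "1 \<le> i"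
  have "\<lfloor>2 powr (real n * R i)\<rfloor> \<le> int (card (WWL_set n \<beta> p))"
    using num_msgs_le_card_WWL_set[OF code con i] unfolding num_msgs_def by linarith
  then have "2 powr (real n * R i) < real (card (WWL_set n \<beta> p)) + 1"
    by linarith
  then have "real n * R i < log 2 (real (card (WWL_set n \<beta> p)) + 1)"
    by (subst less_log_iff) auto
  then show "R i \<le> log 2 (real (card (WWL_set n \<beta> p)) + 1) / real n"
    using n by (simp add: field_simps)
qed

lemma exists_constrained_code_rate_ge:
  assumes n: "1 \<le> n"
  shows "\<exists>r R E D. is_code n R E D \<and> constrained n 1 \<beta> p R E \<and> has_rate R r \<and>
           (log 2 (real (card (WWL_set n \<beta> p))) - log 2 (2 * real n)) / real n \<le> r"
proof -
  have nonempty: "WWL_set n \<beta> p \<noteq> {}"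
    using replicate_False_in_WWL_set by blast
  obtain M E0 D0 where card_WWL: "real (card (WWL_set n \<beta> p)) \<le> 2 * real n * real M"
    and E0: "\<forall>m\<in>{1..M}. \<forall>u\<in>cube n. E0 m u \<in> cube n \<and> E0 m u \<oplus> u \<in> WWL_set n \<beta> p \<and> D0 (E0 m u) = m"
    using exists_coset_code[OF WWL_set_subset_cube nonempty n] by blast
  have M: "0 < real M"
    using card_WWL card_WWL_set_pos[of n \<beta> p] n
    by (cases "M = 0") auto
  define r where "r = log 2 (real M) / real n"
  define R E D where "R = (\<lambda>_::nat. r)" and "E = (\<lambda>_::nat. E0)" and "D = (\<lambda>_::nat. D0)"
  have num: "num_msgs n R i = M" for i
    using M n by (simp add: num_msgs_def R_def r_def)
  have r: "0 \<le> r"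
    using M by (simp add: r_def)
  have code: "is_code n R E D"
    unfolding is_code_def num using E0 r by (simp add: R_def E_def D_def cube_def)
  moreover have "constrained n 1 \<beta> p R E"
    unfolding constrained_1_iff[OF code]
    using E0 length_states[OF code] by (simp add: num E_def cube_def)
  moreover have "log 2 (real (card (WWL_set n \<beta> p))) \<le> log 2 (real M * (2 * real n))"
    using card_WWL card_WWL_set_pos[of n \<beta> p] by (intro log_mono) (auto simp: mult.commute)
  then have "log 2 (real (card (WWL_set n \<beta> p))) - log 2 (2 * real n) \<le> log 2 (real M)"
    using M n by (simp add: log_mult)
  then have "(log 2 (real (card (WWL_set n \<beta> p))) - log 2 (2 * real n)) / real n \<le> r"
    using n by (simp add: r_def divide_right_mono)
  ultimately show ?thesis
    using has_rate_const[of r] unfolding R_def by blast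
qed

lemma Cn_1_bounds:
  assumes n: "1 \<le> n"
  shows "log 2 (real (card (WWL_set n \<beta> p))) / real n - log 2 (2 * real n) / real n \<le> Cn n 1 \<beta> p"
    and "Cn n 1 \<beta> p \<le> log 2 (real (card (WWL_set n \<beta> p))) / real n + 1 / real n"
proof -
  define X where "X = {r. \<exists>R E D. is_code n R E D \<and> constrained n 1 \<beta> p R E \<and> has_rate R r}"
  define S where "S = real (card (WWL_set n \<beta> p))"
  have "log 2 (S + 1) \<le> log 2 (2 * S)"
    using card_WWL_set_pos[of n \<beta> p] by (simp add: S_def)
  also have "\<dots> = log 2 S + 1"
    using card_WWL_set_pos[of n \<beta> p] by (simp add: S_def log_mult)
  finally have X_le: "r \<le> log 2 S / real n + 1 / real n" if "r \<in> X" for r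
    using that rate_le_log_card_WWL_set[of n _ _ _ \<beta> p] n
    by (fastforce simp: X_def S_def add_divide_distrib[symmetric] intro: order_trans divide_right_mono)
  obtain r where r: "r \<in> X" "(log 2 S - log 2 (2 * real n)) / real n \<le> r"
    using exists_constrained_code_rate_ge[OF n, of \<beta> p] unfolding X_def S_def by blast
  have "r \<le> Sup X"
    using r(1) X_le by (intro cSup_upper) (auto simp: bdd_above_def)
  with r(2) show "log 2 S / real n - log 2 (2 * real n) / real n \<le> Cn n 1 \<beta> p"
    unfolding S_def by (simp add: Cn_def X_def diff_divide_distrib)
  have "Sup X \<le> log 2 S / real n + 1 / real n"
    using r(1) X_le by (intro cSup_least) auto
  then show "Cn n 1 \<beta> p \<le> log 2 S / real n + 1 / real n"
    by (simp add: Cn_def X_def)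
qed

section \<open>Fekete's lemma\<close>

lemma subadditive_mult_add_le:
  fixes a :: "nat \<Rightarrow> real"
  assumes sub: "\<And>m k. a (m + k) \<le> a m + a k"
  shows "a (q * k + r) \<le> real q * a k + a r"
proof (induction q)
  case (Suc q)
  have "a (Suc q * k + r) \<le> a k + a (q * k + r)"
    using sub[of k "q * k + r"] by (simp add: add.assoc)
  with Suc show ?case
    by (simp add: algebra_simps)
qed simp

lemma subadditive_div_le:
  fixes a :: "nat \<Rightarrow> real"
  assumes sub: "\<And>m k. a (m + k) \<le> a m + a k" and nonneg: "\<And>n. 0 \<le> a n"
    and k: "1 \<le> k" and n: "1 \<le> n"
  shows "a n / real n \<le> a k / real k + (\<Sum>r<k. a r) / real n"
proof -
  define q r where "q = n div k" and "r = n mod k"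
  have "a n \<le> real q * a k + a r"
    using subadditive_mult_add_le[OF sub, of q k r] by (simp add: q_def r_def)
  moreover have "a r \<le> (\<Sum>r<k. a r)"
    unfolding r_def using k nonneg by (intro member_le_sum) auto
  moreover have "real q * a k \<le> real n * (a k / real k)"
  proof -
    have "real (q * k) \<le> real n"
      unfolding q_def of_nat_le_iff by (rule div_times_less_eq_dividend)
    then have "real q * real k * a k \<le> real n * a k"
      using nonneg[of k] by (simp add: mult_right_mono)
    then show ?thesis
      using k by (simp add: field_simps)
  qed
  ultimately have "a n \<le> real n * (a k / real k) + (\<Sum>r<k. a r)"
    by linarith
  then show ?thesis
    using n by (simp add: field_simps)
qed

lemma subadditive_div_convergent:
  fixes a :: "nat \<Rightarrow> real"
  assumes sub: "\<And>m k. a (m + k) \<le> a m + a k" and nonneg: "\<And>n. 0 \<le> a n"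
  shows "convergent (\<lambda>n. a n / real n)"
proof -
  define L where "L = (INF n\<in>{1..}. a n / real n)"
  have bdd: "bdd_below ((\<lambda>n. a n / real n) ` {1..})"
    using nonneg by (intro bdd_belowI[of _ 0]) auto
  have L_le: "L \<le> a n / real n" if "1 \<le> n" for n
    unfolding L_def using that bdd by (intro cINF_lower) auto
  have "(\<lambda>n. a n / real n) \<longlonglongrightarrow> L"
  proof (rule LIMSEQ_I)
    fix e :: real assume e: "0 < e"
    obtain k where k: "1 \<le> k" "a k / real k < L + e / 2"
      using cINF_less_iff[OF _ bdd, of "L + e / 2"] e by (auto simp: L_def)
    define C where "C = (\<Sum>r<k. a r)"
    obtain N0 :: nat where N0: "2 * C / e < real N0"
      using reals_Archimedean2 by blast
    show "\<exists>no. \<forall>n\<ge>no. norm (a n / real n - L) < e"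
    proof (intro exI allI impI)
      fix n assume n: "max 1 N0 \<le> n"
      have "2 * C < e * real N0"
        using N0 e by (simp add: field_simps)
      also have "\<dots> \<le> e * real n"
        using n e by simp
      finally have "C / real n < e / 2"
        using n by (simp add: field_simps)
      moreover have "a n / real n \<le> a k / real k + C / real n"
        unfolding C_def using subadditive_div_le[OF sub nonneg k(1)] n by simp
      ultimately have "a n / real n - L < e"
        using k(2) by linarith
      moreover have "L \<le> a n / real n"
        using L_le n by simp
      ultimately show "norm (a n / real n - L) < e"
        by simp
    qed
  qed
  then show ?thesis
    by (rule convergentI)
qed

theorem theorem5:
  fixes \<beta> p :: nat
  assumes "0 < p" and "p \<le> \<beta>"
  shows "\<exists>L. (\<lambda>n. Cn n 1 \<beta> p) \<longlonglongrightarrow> L \<and>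
             (\<lambda>n. log 2 (real (card (WWL_set n \<beta> p))) / real n) \<longlonglongrightarrow> L"
proof -
  define a where "a n = log 2 (real (card (WWL_set n \<beta> p)))" for n
  have "convergent (\<lambda>n. a n / real n)"
    using card_WWL_set_pos[of _ \<beta> p]
    by (intro subadditive_div_convergent) (simp_all add: a_def log_card_WWL_set_add_le Suc_le_eq)
  then obtain L where L: "(\<lambda>n. a n / real n) \<longlonglongrightarrow> L"
    by (auto simp: convergent_def)
  have "(\<lambda>n. log 2 (2 * real n) / real n) \<longlonglongrightarrow> 0" and "(\<lambda>n. 1 / real n) \<longlonglongrightarrow> 0"
    by real_asymp+
  from tendsto_diff[OF L this(1)] tendsto_add[OF L this(2)]
  have lim_lower: "(\<lambda>n. a n / real n - log 2 (2 * real n) / real n) \<longlonglongrightarrow> L"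
    and lim_upper: "(\<lambda>n. a n / real n + 1 / real n) \<longlonglongrightarrow> L"
    by simp_all
  have lower: "\<forall>\<^sub>F n in sequentially. a n / real n - log 2 (2 * real n) / real n \<le> Cn n 1 \<beta> p"
    and upper: "\<forall>\<^sub>F n in sequentially. Cn n 1 \<beta> p \<le> a n / real n + 1 / real n"
    unfolding a_def by (rule eventually_sequentiallyI[of 1], erule Cn_1_bounds)+
  have "(\<lambda>n. Cn n 1 \<beta> p) \<longlonglongrightarrow> L"
    by (rule real_tendsto_sandwich[OF lower upper lim_lower lim_upper])
  with L show ?thesis
    unfolding a_def by blast
qed

end
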